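(* Let $\tau>0$ and $a>2$. There exist constants $\gamma\in(0,1/2]$, $c>0$ and $C>0$ depending only on $a$ and $\tau$ such that the following holds. Let $\tilde\sigma^2$ be the median-of-means estimator (defined in the context) built with this $\gamma$. Then for all integers $s,d$ with $1\le s<\lfloor\gamma d\rfloor/4$, $$\inf_{P_\xi\in\mathcal P_{a,\tau}}\ \inf_{\sigma>0}\ \inf_{\theta\in\Theta_s}\mathbf P_{\theta,P_\xi,\sigma}\Big(\tfrac12\le \tfrac{\tilde\sigma^2}{\sigma^2}\le \tfrac32\Big)\ge 1-e^{-cd},$$ $$\sup_{P_\xi\in\mathcal P_{a,\tau}}\ \sup_{\sigma>0}\ \sup_{\theta\in\Theta_s}\mathbf E_{\theta,P_\xi,\sigma}|\tilde\sigma^2-\sigma^2|\le C\sigma^2,$$ and, if moreover $a>4$, $$\sup_{P_\xi\in\mathcal P_{a,\tau}}\ \sup_{\sigma>0}\ \sup_{\theta\in\Theta_s}\mathbf E_{\theta,P_\xi,\sigma}(\tilde\sigma^2-\sigma^2)^2\le C\sigma^4.$$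
   Context: Model: for an integer $d\ge1$ we observe $Y=(Y_1,\dots,Y_d)$ with $Y_i=\theta_i+\sigma\xi_i$, $i=1,\dots,d$, where $\theta=(\theta_1,\dots,\theta_d)\in\mathbb R^d$, $\sigma>0$, and $\xi_1,\dots,\xi_d$ are i.i.d. with distribution $P_\xi$ such that $\mathbf E\xi_1=0$, $\mathbf E\xi_1^2=1$. $\mathbf P_{\theta,P_\xi,\sigma}$ and $\mathbf E_{\theta,P_\xi,\sigma}$ denote the law of $Y$ and its expectation. $\|\theta\|_0$ is the number of nonzero coordinates of $\theta$ and $\Theta_s=\{\theta\in\mathbb R^d:\|\theta\|_0\le s\}$. For $\tau>0,a\ge2$, $\mathcal P_{a,\tau}$ is the set of distributions of a real random variable $\xi_1$ with $\mathbf E\xi_1=0$, $\mathbf E\xi_1^2=1$ and $\mathbf P(|\xi_1|>t)\le(\tau/t)^a$ for all $t\ge2$. Median-of-means estimator: given $\gamma\in(0,1/2]$, let $m=\lfloor\gamma d\rfloor$, partition $\{1,\dots,d\}$ into disjoint blocks $B_1,\dots,B_m$ each of cardinality at least $\lfloor d/m\rfloor$, set $\bar\sigma_i^2=|B_i|^{-1}\sum_{j\in B_i}Y_j^2$ and $\tilde\sigma^2=\mathrm{med}(\bar\sigma_1^2,\dots,\bar\sigma_m^2)$ (sample median). *)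

theory Defs
  imports "HOL-Probability.Probability"
begin

definition med :: "real list \<Rightarrow> real" where
  "med xs = (let ys = sort xs; n = length xs in
     if odd n then ys ! (n div 2) else (ys ! (n div 2 - 1) + ys ! (n div 2)) / 2)"

definition mom_partition :: "nat \<Rightarrow> nat \<Rightarrow> (nat \<Rightarrow> nat set) \<Rightarrow> bool" where
  "mom_partition d m B \<longleftrightarrow>
     (\<forall>i<m. B i \<subseteq> {0..<d} \<and> card (B i) \<ge> d div m) \<and>
     (\<forall>i<m. \<forall>j<m. i \<noteq> j \<longrightarrow> B i \<inter> B j = {}) \<and>
     (\<Union>i<m. B i) = {0..<d}"

definition mom_est :: "(nat \<Rightarrow> nat set) \<Rightarrow> nat \<Rightarrow> (nat \<Rightarrow> real) \<Rightarrow> real" where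
  "mom_est B m Y = med (map (\<lambda>i. (\<Sum>j\<in>B i. (Y j)\<^sup>2) / real (card (B i))) [0..<m])"

definition noise_class :: "real \<Rightarrow> real \<Rightarrow> real measure \<Rightarrow> bool" where
  "noise_class a \<tau> P \<longleftrightarrow>
     prob_space P \<and> sets P = sets borel \<and>
     integrable P (\<lambda>x. x) \<and> integrable P (\<lambda>x. x\<^sup>2) \<and>
     integral\<^sup>L P (\<lambda>x. x) = 0 \<and> integral\<^sup>L P (\<lambda>x. x\<^sup>2) = 1 \<and>
     (\<forall>t\<ge>2. measure P {x. \<bar>x\<bar> > t} \<le> (\<tau> / t) powr a)"

definition sparse :: "nat \<Rightarrow> nat \<Rightarrow> (nat \<Rightarrow> real) \<Rightarrow> bool" where
  "sparse d s \<theta> \<longleftrightarrow> card {i\<in>{0..<d}. \<theta> i \<noteq> 0} \<le> s"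

end

theory Submission
  imports Defs
begin

text \<open>
  Choose a truncation level \<open>l\<close> with \<open>E (\<xi>\<^sup>2 - min \<xi>\<^sup>2 l\<^sup>2) \<le> 1/64\<close>, which the polynomial tail
  permits uniformly over the noise class, and let every block contain at least \<open>64 l\<^sup>4\<close>
  coordinates. On a block where \<open>\<theta>\<close> vanishes, Hoeffding's inequality for the truncated squares
  and Markov's inequality for the remainder put the block mean of \<open>\<xi>\<^sup>2\<close> into \<open>[1/2, 3/2]\<close> with
  probability at least \<open>7/8\<close>. These blocks are independent, so by Hoeffding's inequality again
  fewer than \<open>m/4\<close> of them fail, except with probability \<open>exp (-m/32)\<close>; at most \<open>s < m/4\<close>
  blocks meet the support of \<open>\<theta>\<close>. Hence more than half of the block means lie in
  \<open>[\<sigma>\<^sup>2/2, 3\<sigma>\<^sup>2/2]\<close>, and so does their median.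

  For the moment bounds, the median is at most \<open>4/m\<close> times the sum of the block means over the
  blocks where \<open>\<theta>\<close> vanishes, whose mean is \<open>\<sigma>\<^sup>2\<close> per block and, by Cauchy-Schwarz, whose
  second moment is controlled by \<open>\<sigma>\<^sup>4 E \<xi>\<^sup>4\<close>.
\<close>

section \<open>Order statistics and the sample median\<close>

lemma sort_nth_iff_less_length_filter:
  fixes xs :: "'a::linorder list"
  assumes r: "r < length xs" and down: "\<And>x y. P y \<Longrightarrow> x \<le> y \<Longrightarrow> P x"
  shows "P (sort xs ! r) \<longleftrightarrow> r < length (filter P xs)"
proof -
  define ys where "ys = sort xs"
  have sorted: "sorted ys" and len: "length ys = length xs" by (simp_all add: ys_def)
  have "length (filter P xs) = length (filter P ys)"
    unfolding ys_def by (metis mset_filter mset_sort size_mset)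
  also have "\<dots> = card {i. i < length ys \<and> P (ys ! i)}"
    by (rule length_filter_conv_card)
  finally have count: "length (filter P xs) = card {i. i < length ys \<and> P (ys ! i)}" .
  have "P (ys ! r) \<longleftrightarrow> r < length (filter P xs)"
  proof
    assume "P (ys ! r)"
    then have "{0..r} \<subseteq> {i. i < length ys \<and> P (ys ! i)}"
      using r len down sorted_nth_mono[OF sorted] by auto
    from card_mono[OF _ this] show "r < length (filter P xs)" unfolding count by simp
  next
    assume less: "r < length (filter P xs)"
    show "P (ys ! r)"
    proof (rule ccontr)
      assume "\<not> P (ys ! r)"
      have "{i. i < length ys \<and> P (ys ! i)} \<subseteq> {0..<r}"
      proof (rule subsetI, rule ccontr)
        fix i assume i: "i \<in> {i. i < length ys \<and> P (ys ! i)}" and "i \<notin> {0..<r}"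
        then have "ys ! r \<le> ys ! i" using sorted_nth_mono[OF sorted] by auto
        with i down \<open>\<not> P (ys ! r)\<close> show False by blast
      qed
      from card_mono[OF _ this] less show False unfolding count by simp
    qed
  qed
  then show ?thesis by (simp add: ys_def)
qed

lemma med_le_sort_nth_half:
  assumes "xs \<noteq> []"
  shows "med xs \<le> sort xs ! (length xs div 2)"
proof -
  have "sort xs ! (length xs div 2 - 1) \<le> sort xs ! (length xs div 2)"
    using assms by (intro sorted_nth_mono) auto
  then show ?thesis by (simp add: med_def Let_def)
qed

lemma sort_nth_half_le_med:
  assumes "xs \<noteq> []"
  shows "sort xs ! ((length xs - 1) div 2) \<le> med xs"
proof (cases "odd (length xs)")
  case True
  then have "(length xs - 1) div 2 = length xs div 2" by (auto elim: oddE)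
  with True show ?thesis by (simp add: med_def Let_def)
next
  case False
  then have half: "(length xs - 1) div 2 = length xs div 2 - 1" by (auto elim: evenE)
  have "sort xs ! (length xs div 2 - 1) \<le> sort xs ! (length xs div 2)"
    using assms by (intro sorted_nth_mono) auto
  with False show ?thesis unfolding half by (simp add: med_def Let_def)
qed

lemma med_le_if_few_above:
  assumes few: "2 * length (filter (\<lambda>x. hi < x) xs) < length xs"
  shows "med xs \<le> hi"
proof -
  have "length (filter (\<lambda>x. x \<le> hi) xs) + length (filter (\<lambda>x. hi < x) xs) = length xs"
    using sum_length_filter_compl[of "\<lambda>x. x \<le> hi" xs] by (simp add: not_le)
  with few have "length xs div 2 < length (filter (\<lambda>x. x \<le> hi) xs)" by linarith
  then have "sort xs ! (length xs div 2) \<le> hi"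
    using sort_nth_iff_less_length_filter[of "length xs div 2" xs "\<lambda>x. x \<le> hi"] few by fastforce
  moreover have "xs \<noteq> []" using few by auto
  ultimately show ?thesis using med_le_sort_nth_half by fastforce
qed

lemma med_ge_if_few_below:
  assumes few: "2 * length (filter (\<lambda>x. x < lo) xs) < length xs"
  shows "lo \<le> med xs"
proof -
  have "\<not> (length xs - 1) div 2 < length (filter (\<lambda>x. x < lo) xs)" using few by linarith
  then have "lo \<le> sort xs ! ((length xs - 1) div 2)"
    using sort_nth_iff_less_length_filter[of "(length xs - 1) div 2" xs "\<lambda>x. x < lo"] few
    by (fastforce simp: not_less)
  moreover have "xs \<noteq> []" using few by auto
  ultimately show ?thesis using sort_nth_half_le_med by fastforce
qed

lemma med_nonneg:
  assumes "xs \<noteq> []" and "\<And>x. x \<in> set xs \<Longrightarrow> 0 \<le> x"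
  shows "0 \<le> med xs"
  using assms by (intro med_ge_if_few_below) (auto simp: filter_empty_conv not_less)

lemma length_filter_map_upt:
  "length (filter P (map v [0..<m])) = card {i. i < m \<and> P (v i)}"
  by (auto simp: length_filter_conv_card intro!: arg_cong[where f=card])

lemma card_above_mult_le_sum:
  fixes v :: "'a \<Rightarrow> real"
  assumes "finite I" and "\<And>i. i \<in> I \<Longrightarrow> 0 \<le> v i"
  shows "real (card {i\<in>I. h < v i}) * h \<le> sum v I"
proof -
  have "real (card {i\<in>I. h < v i}) * h = (\<Sum>i\<in>{i\<in>I. h < v i}. h)" by simp
  also have "\<dots> \<le> (\<Sum>i\<in>{i\<in>I. h < v i}. v i)" by (rule sum_mono) simp
  also have "\<dots> \<le> sum v I" using assms by (intro sum_mono2) auto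
  finally show ?thesis .
qed

text \<open>By Markov's inequality at most \<open>m/4\<close> indices in \<open>I\<close> exceed the bound, and fewer than
  \<open>m/4\<close> indices lie outside \<open>I\<close>.\<close>
lemma med_le_four_mean_of_majority:
  fixes v :: "nat \<Rightarrow> real"
  assumes I: "I \<subseteq> {..<m}" and nonneg: "\<And>i. i \<in> I \<Longrightarrow> 0 \<le> v i"
    and most: "4 * (m - card I) < m"
  shows "med (map v [0..<m]) \<le> 4 / m * sum v I"
proof (rule med_le_if_few_above)
  define h where "h = 4 / m * sum v I"
  have fin: "finite I" using I finite_subset by blast
  have m: "m > 0" using most by simp
  have markov: "real (card {i\<in>I. h < v i}) * h \<le> sum v I"
    by (rule card_above_mult_le_sum[OF fin nonneg])
  have above_I: "4 * card {i\<in>I. h < v i} \<le> m"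
  proof (cases "sum v I = 0")
    case True
    then have "{i\<in>I. h < v i} = {}"
      using sum_nonneg_eq_0_iff[OF fin nonneg] unfolding h_def by auto
    then show ?thesis by (metis card.empty le0 mult_0_right)
  next
    case False
    moreover have "0 \<le> sum v I" using nonneg by (rule sum_nonneg)
    ultimately have pos: "sum v I > 0" by linarith
    have "(real (4 * card {i\<in>I. h < v i}) / m) * sum v I \<le> 1 * sum v I"
      using markov unfolding h_def by (simp add: field_simps)
    then have "real (4 * card {i\<in>I. h < v i}) / m \<le> 1"
      using pos by (rule mult_right_le_imp_le)
    then show ?thesis using m by (simp add: field_simps)
  qed
  have "{i. i < m \<and> h < v i} \<subseteq> {i\<in>I. h < v i} \<union> ({..<m} - I)" by auto
  then have "card {i. i < m \<and> h < v i} \<le> card ({i\<in>I. h < v i} \<union> ({..<m} - I))"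
    using fin by (intro card_mono) auto
  also have "\<dots> \<le> card {i\<in>I. h < v i} + card ({..<m} - I)" by (rule card_Un_le)
  also have "card ({..<m} - I) = m - card I" using I fin by (simp add: card_Diff_subset)
  finally show "2 * length (filter (\<lambda>x. h < x) (map v [0..<m])) < length (map v [0..<m])"
    using above_I most unfolding length_filter_map_upt by simp
qed

lemma borel_measurable_sort_nth:
  fixes v :: "nat \<Rightarrow> 'a \<Rightarrow> real"
  assumes v: "\<And>i. i < m \<Longrightarrow> v i \<in> borel_measurable N" and r: "r < m"
  shows "(\<lambda>x. sort (map (\<lambda>i. v i x) [0..<m]) ! r) \<in> borel_measurable N"
proof (rule borel_measurableI_le)
  fix y
  have "sort (map (\<lambda>i. v i x) [0..<m]) ! r \<le> y \<longleftrightarrow> real r < (\<Sum>i<m. of_bool (v i x \<le> y))" for x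
  proof -
    have "sort (map (\<lambda>i. v i x) [0..<m]) ! r \<le> y \<longleftrightarrow> r < card {i. i < m \<and> v i x \<le> y}"
      using sort_nth_iff_less_length_filter[of r "map (\<lambda>i. v i x) [0..<m]" "\<lambda>z. z \<le> y"] r
      unfolding length_filter_map_upt by simp
    moreover have "{..<m} \<inter> {i. v i x \<le> y} = {i. i < m \<and> v i x \<le> y}" by auto
    ultimately show ?thesis by simp
  qed
  then have "{x \<in> space N. sort (map (\<lambda>i. v i x) [0..<m]) ! r \<le> y}
      = {x \<in> space N. real r < (\<Sum>i<m. of_bool (v i x \<le> y))}"
    by blast
  also have "\<dots> \<in> sets N" using v by measurable
  finally show "{x \<in> space N. sort (map (\<lambda>i. v i x) [0..<m]) ! r \<le> y} \<in> sets N" .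
qed

lemma borel_measurable_med:
  fixes v :: "nat \<Rightarrow> 'a \<Rightarrow> real"
  assumes v: "\<And>i. i < m \<Longrightarrow> v i \<in> borel_measurable N" and m: "0 < m"
  shows "(\<lambda>x. med (map (\<lambda>i. v i x) [0..<m])) \<in> borel_measurable N"
proof -
  have "(\<lambda>x. sort (map (\<lambda>i. v i x) [0..<m]) ! r) \<in> borel_measurable N" if "r < m" for r
    using v that by (rule borel_measurable_sort_nth)
  then have [measurable]: "(\<lambda>x. sort (map (\<lambda>i. v i x) [0..<m]) ! (m div 2)) \<in> borel_measurable N"
    "(\<lambda>x. sort (map (\<lambda>i. v i x) [0..<m]) ! (m div 2 - 1)) \<in> borel_measurable N"
    using m by auto
  show ?thesis unfolding med_def Let_def length_map length_upt diff_zero by measurable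
qed

section \<open>Moments under a polynomial tail bound\<close>

lemma dyadic_shell:
  fixes l x :: real
  assumes "0 < l" "l < x"
  obtains k :: nat where "2^k * l < x" "x \<le> 2^(k+1) * l"
proof -
  obtain n :: nat where "x / l < 2 ^ n" using real_arch_pow[of 2 "x / l"] by auto
  then have ex: "\<exists>n::nat. x \<le> 2^n * l" using assms by (auto simp: field_simps intro!: exI[of _ n])
  define N where "N = (LEAST n::nat. x \<le> 2^n * l)"
  have N: "x \<le> 2^N * l" unfolding N_def by (rule LeastI_ex[OF ex])
  have "N \<noteq> 0" using N assms by (cases N) auto
  then obtain k where k: "N = k + 1" by (metis Suc_eq_plus1 not0_implies_Suc)
  have "\<not> x \<le> 2^k * l" using not_less_Least[of k "\<lambda>n. x \<le> 2^n * l"] k unfolding N_def by simp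
  then show ?thesis using N k by (intro that[of k]) auto
qed

lemma abs_power_tail_le_dyadic_sum:
  fixes x l :: real
  assumes "0 < l"
  shows "ennreal (\<bar>x\<bar>^p * indicator {x. l < \<bar>x\<bar>} x)
    \<le> (\<Sum>k. ennreal ((2^(k+1) * l)^p) * indicator {x. 2^k * l < \<bar>x\<bar>} x)"
proof (cases "l < \<bar>x\<bar>")
  case True
  then obtain k :: nat where k: "2^k * l < \<bar>x\<bar>" "\<bar>x\<bar> \<le> 2^(k+1) * l"
    using dyadic_shell[OF assms] by blast
  define f where "f k = ennreal ((2^(k+1) * l)^p) * indicator {x. 2^k * l < \<bar>x\<bar>} x" for k :: nat
  have "ennreal (\<bar>x\<bar>^p * indicator {x. l < \<bar>x\<bar>} x) \<le> f k"
    using True k by (auto simp: f_def intro!: ennreal_leI power_mono)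
  also have "\<dots> \<le> (\<Sum>k. f k)" using sum_le_suminf[OF summableI, of "{k}" f] by simp
  finally show ?thesis unfolding f_def .
qed simp

lemma dyadic_tail_term:
  fixes l \<tau> a :: real and p k :: nat
  assumes l: "0 < l" and \<tau>: "0 < \<tau>"
  shows "(2^(k+1) * l)^p * (\<tau> / (2^k * l)) powr a
    = 2^p * l powr (p - a) * \<tau> powr a * (2 powr (p - a))^k"
proof -
  define u where "u = 2^k * l"
  have u: "0 < u" using l by (simp add: u_def)
  have "(2^(k+1) * l)^p * (\<tau> / (2^k * l)) powr a = 2^p * u powr p * (\<tau> powr a / u powr a)"
    using u \<tau> by (simp add: u_def powr_realpow power_mult_distrib powr_divide)
  also have "\<dots> = 2^p * \<tau> powr a * u powr (p - a)" by (simp add: powr_diff)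
  also have "u powr (p - a) = (2 powr (p - a))^k * l powr (p - a)"
    using l by (simp add: u_def powr_mult powr_realpow[symmetric] powr_powr mult.commute)
  finally show ?thesis by (simp add: ac_simps)
qed

text \<open>Summing the tail bound over the dyadic shells \<open>2^k l < |x| \<le> 2^(k+1) l\<close> gives a geometric
  series with ratio \<open>2 powr (p - a)\<close>.\<close>
lemma nn_integral_abs_power_tail_le:
  fixes P :: "real measure" and p :: nat and a \<tau> l :: real
  assumes fin: "finite_measure P" and sets: "sets P = sets borel"
    and tail: "\<And>t. 2 \<le> t \<Longrightarrow> measure P {x. t < \<bar>x\<bar>} \<le> (\<tau> / t) powr a"
    and pa: "real p < a" and l: "2 \<le> l" and \<tau>: "0 < \<tau>"
  shows "(\<integral>\<^sup>+x. ennreal (\<bar>x\<bar>^p * indicator {x. l < \<bar>x\<bar>} x) \<partial>P)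
    \<le> ennreal (2^p * l powr (p - a) * \<tau> powr a / (1 - 2 powr (p - a)))"
proof -
  define r where "r = (2::real) powr (p - a)"
  define C where "C = 2^p * l powr (p - a) * \<tau> powr a"
  have r: "0 < r" "r < 1" using pa unfolding r_def by (auto intro: powr_less_one)
  have [measurable]: "{x. t < \<bar>x\<bar>} \<in> sets P" for t :: real unfolding sets by measurable
  have shell: "ennreal ((2^(k+1) * l)^p) * emeasure P {x. 2^k * l < \<bar>x\<bar>} \<le> ennreal (C * r^k)"
    for k :: nat
  proof -
    have "1 * 2 \<le> 2^k * l" using l by (intro mult_mono) auto
    then have "emeasure P {x. 2^k * l < \<bar>x\<bar>} \<le> ennreal ((\<tau> / (2^k * l)) powr a)"
      using tail by (simp add: finite_measure.emeasure_eq_measure[OF fin] ennreal_leI)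
    then have "ennreal ((2^(k+1) * l)^p) * emeasure P {x. 2^k * l < \<bar>x\<bar>}
        \<le> ennreal ((2^(k+1) * l)^p) * ennreal ((\<tau> / (2^k * l)) powr a)"
      by (rule mult_left_mono) simp
    also have "\<dots> = ennreal (C * r^k)"
      using dyadic_tail_term[of l \<tau> k p a] l \<tau>
      by (simp add: C_def r_def ennreal_mult''[symmetric])
    finally show ?thesis .
  qed
  have "(\<integral>\<^sup>+x. ennreal (\<bar>x\<bar>^p * indicator {x. l < \<bar>x\<bar>} x) \<partial>P)
      \<le> (\<integral>\<^sup>+x. (\<Sum>k. ennreal ((2^(k+1) * l)^p) * indicator {x. 2^k * l < \<bar>x\<bar>} x) \<partial>P)"
    using l by (intro nn_integral_mono abs_power_tail_le_dyadic_sum) auto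
  also have "\<dots> = (\<Sum>k. ennreal ((2^(k+1) * l)^p) * emeasure P {x. 2^k * l < \<bar>x\<bar>})"
    by (subst nn_integral_suminf) (auto simp: nn_integral_cmult_indicator)
  also have "\<dots> \<le> (\<Sum>k. ennreal (C * r^k))" by (intro suminf_le summableI shell)
  also have "\<dots> = ennreal (C / (1 - r))"
  proof -
    have sums: "(\<lambda>k. C * r^k) sums (C / (1 - r))"
      using sums_mult[OF geometric_sums[of r], of C] r by simp
    moreover have "0 \<le> C" unfolding C_def by simp
    ultimately show ?thesis
      using r by (subst suminf_ennreal2) (auto simp: sums_iff)
  qed
  finally show ?thesis unfolding C_def r_def .
qed

lemma noise_class_truncation_error_le:
  assumes nc: "noise_class a \<tau> P" and a: "2 < a" and \<tau>: "0 < \<tau>" and l: "2 \<le> l"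
  shows "(\<integral>x. x\<^sup>2 - min (x\<^sup>2) (l\<^sup>2) \<partial>P) \<le> 4 * l powr (2 - a) * \<tau> powr a / (1 - 2 powr (2 - a))"
proof -
  have P: "prob_space P" "sets P = sets borel" "integrable P (\<lambda>x. x\<^sup>2)"
    and tail: "\<And>t. 2 \<le> t \<Longrightarrow> measure P {x. t < \<bar>x\<bar>} \<le> (\<tau> / t) powr a"
    using nc unfolding noise_class_def by auto
  have int: "integrable P (\<lambda>x. x\<^sup>2 - min (x\<^sup>2) (l\<^sup>2))"
    by (rule Bochner_Integration.integrable_bound[OF P(3)]) (auto simp: measurable_cong_sets[OF P(2)])
  have pointwise: "ennreal (x\<^sup>2 - min (x\<^sup>2) (l\<^sup>2)) \<le> ennreal (\<bar>x\<bar>^2 * indicator {x. l < \<bar>x\<bar>} x)"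
    for x :: real
    using l by (cases "l < \<bar>x\<bar>") (auto intro!: ennreal_leI simp: abs_le_square_iff[symmetric])
  have "ennreal (\<integral>x. x\<^sup>2 - min (x\<^sup>2) (l\<^sup>2) \<partial>P) = (\<integral>\<^sup>+x. ennreal (x\<^sup>2 - min (x\<^sup>2) (l\<^sup>2)) \<partial>P)"
    by (rule nn_integral_eq_integral[symmetric, OF int]) auto
  also have "\<dots> \<le> (\<integral>\<^sup>+x. ennreal (\<bar>x\<bar>^2 * indicator {x. l < \<bar>x\<bar>} x) \<partial>P)"
    by (intro nn_integral_mono pointwise)
  also have "\<dots> \<le> ennreal (2^2 * l powr (real 2 - a) * \<tau> powr a / (1 - 2 powr (real 2 - a)))"
    using P a by (intro nn_integral_abs_power_tail_le tail l \<tau> prob_space.finite_measure) auto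
  finally have "ennreal (\<integral>x. x\<^sup>2 - min (x\<^sup>2) (l\<^sup>2) \<partial>P)
      \<le> ennreal (4 * l powr (2 - a) * \<tau> powr a / (1 - 2 powr (2 - a)))"
    by simp
  moreover have "2 powr (2 - a) < 1" using a by (intro powr_less_one) auto
  ultimately show ?thesis by (subst (asm) ennreal_le_iff) (auto intro!: divide_nonneg_nonneg)
qed

lemma noise_class_truncation_level:
  assumes \<tau>: "0 < \<tau>" and a: "2 < a"
  obtains l :: real where "0 < l" "\<And>P. noise_class a \<tau> P \<Longrightarrow> (\<integral>x. x\<^sup>2 - min (x\<^sup>2) (l\<^sup>2) \<partial>P) \<le> 1/64"
proof -
  define K where "K = 4 * \<tau> powr a / (1 - 2 powr (2 - a))"
  have "((\<lambda>l. K * l powr (2 - a)) \<longlongrightarrow> K * 0) at_top"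
    using a by (intro tendsto_mult tendsto_const tendsto_neg_powr filterlim_ident) auto
  then have "eventually (\<lambda>l. K * l powr (2 - a) < 1/64 \<and> 2 \<le> l) at_top"
    by (intro eventually_conj order_tendstoD(2) eventually_ge_at_top) auto
  then obtain l where l: "K * l powr (2 - a) < 1/64" "2 \<le> l"
    unfolding eventually_at_top_linorder by blast
  show ?thesis
  proof (rule that)
    show "0 < l" using l(2) by simp
  next
    fix P assume "noise_class a \<tau> P"
    have "4 * l powr (2 - a) * \<tau> powr a / (1 - 2 powr (2 - a)) = K * l powr (2 - a)"
      by (simp add: K_def)
    with noise_class_truncation_error_le[OF \<open>noise_class a \<tau> P\<close> a \<tau> l(2)] l(1)
    show "(\<integral>x. x\<^sup>2 - min (x\<^sup>2) (l\<^sup>2) \<partial>P) \<le> 1/64" by linarith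
  qed
qed

lemma noise_class_fourth_moment:
  assumes nc: "noise_class a \<tau> P" and a: "4 < a" and \<tau>: "0 < \<tau>"
  shows "integrable P (\<lambda>x. x^4)"
    and "(\<integral>x. x^4 \<partial>P) \<le> 16 + 16 * 2 powr (4 - a) * \<tau> powr a / (1 - 2 powr (4 - a))"
proof -
  define T where "T = 16 * 2 powr (4 - a) * \<tau> powr a / (1 - 2 powr (4 - a))"
  have P: "prob_space P" "sets P = sets borel"
    and tail: "\<And>t. 2 \<le> t \<Longrightarrow> measure P {x. t < \<bar>x\<bar>} \<le> (\<tau> / t) powr a"
    using nc unfolding noise_class_def by auto
  have "2 powr (4 - a) < 1" using a by (intro powr_less_one) auto
  then have T: "0 \<le> T" unfolding T_def by (intro divide_nonneg_nonneg) auto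
  have pointwise: "ennreal (x^4) \<le> 16 + ennreal (\<bar>x\<bar>^4 * indicator {x. 2 < \<bar>x\<bar>} x)" for x :: real
  proof (cases "2 < \<bar>x\<bar>")
    case False
    then have "x^4 \<le> 16" using power_mono[of "\<bar>x\<bar>" 2 4] by (simp add: power_even_abs_numeral)
    then have "ennreal (x^4) \<le> 16" using ennreal_leI[of "x^4" 16] by simp
    then show ?thesis using False by simp
  qed (simp add: power_even_abs_numeral)
  have "(\<integral>\<^sup>+x. ennreal (x^4) \<partial>P) \<le> (\<integral>\<^sup>+x. 16 + ennreal (\<bar>x\<bar>^4 * indicator {x. 2 < \<bar>x\<bar>} x) \<partial>P)"
    by (intro nn_integral_mono pointwise)
  also have "\<dots> = 16 + (\<integral>\<^sup>+x. ennreal (\<bar>x\<bar>^4 * indicator {x. 2 < \<bar>x\<bar>} x) \<partial>P)"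
    using P by (subst nn_integral_add) (auto simp: prob_space.emeasure_space_1 measurable_cong_sets[OF P(2)])
  also have "\<dots> \<le> 16 + ennreal T"
    unfolding T_def using P a
    by (intro add_left_mono order_trans[OF nn_integral_abs_power_tail_le[of P \<tau> a 4 2]] tail \<tau>
        prob_space.finite_measure) auto
  finally have bound: "(\<integral>\<^sup>+x. ennreal (x^4) \<partial>P) \<le> ennreal (16 + T)"
    using T by (simp add: ennreal_plus[symmetric])
  show int: "integrable P (\<lambda>x. x^4)"
    using bound by (intro integrableI_bounded) (auto simp: measurable_cong_sets[OF P(2)] top.not_eq_extremum
        intro: le_less_trans)
  have "ennreal (\<integral>x. x^4 \<partial>P) \<le> ennreal (16 + T)"
    using bound by (subst nn_integral_eq_integral[symmetric, OF int]) auto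
  then show "(\<integral>x. x^4 \<partial>P) \<le> 16 + T" using T by (subst (asm) ennreal_le_iff) auto
qed

section \<open>Blocks of coordinates\<close>

definition block_mean :: "nat set \<Rightarrow> (nat \<Rightarrow> real) \<Rightarrow> real" where
  "block_mean S Y = (\<Sum>j\<in>S. Y j) / card S"

definition clean_blocks :: "(nat \<Rightarrow> nat set) \<Rightarrow> nat \<Rightarrow> (nat \<Rightarrow> real) \<Rightarrow> nat set" where
  "clean_blocks B m \<theta> = {i. i < m \<and> (\<forall>j\<in>B i. \<theta> j = 0)}"

lemma mom_est_eq_med_block_mean:
  "mom_est B m Y = med (map (\<lambda>i. block_mean (B i) (\<lambda>j. (Y j)\<^sup>2)) [0..<m])"
  by (simp add: mom_est_def block_mean_def)

lemma block_mean_nonneg: "(\<And>j. j \<in> S \<Longrightarrow> 0 \<le> Y j) \<Longrightarrow> 0 \<le> block_mean S Y"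
  unfolding block_mean_def by (intro divide_nonneg_nonneg sum_nonneg) auto

lemma block_mean_cmult: "block_mean S (\<lambda>j. c * Y j) = c * block_mean S Y"
  by (simp add: block_mean_def sum_distrib_left)

lemma block_mean_cong: "(\<And>j. j \<in> S \<Longrightarrow> Y j = Y' j) \<Longrightarrow> block_mean S Y = block_mean S Y'"
  unfolding block_mean_def by (simp cong: sum.cong)

lemma block_mean_square_le: "(block_mean S Y)\<^sup>2 \<le> block_mean S (\<lambda>j. (Y j)\<^sup>2)"
proof (cases "card S = 0")
  case False
  then show ?thesis
    using sum_squared_le_sum_of_squares[of Y S]
    by (simp add: block_mean_def power2_eq_square field_simps)
qed (simp add: block_mean_def)

lemma mom_partition_block:
  assumes "mom_partition d m B" and "i < m"
  shows "B i \<subseteq> {0..<d}" and "d div m \<le> card (B i)"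
  using assms unfolding mom_partition_def by auto

lemma mom_partition_disjoint: "mom_partition d m B \<Longrightarrow> disjoint_family_on B {..<m}"
  unfolding mom_partition_def disjoint_family_on_def by auto

text \<open>Each dirty block contains a nonzero coordinate of \<open>\<theta>\<close>, and disjoint blocks contain
  different ones.\<close>
lemma card_clean_blocks_ge:
  assumes part: "mom_partition d m B" and sp: "sparse d s \<theta>"
  shows "m \<le> card (clean_blocks B m \<theta>) + s"
proof -
  define D where "D = {i. i < m \<and> (\<exists>j\<in>B i. \<theta> j \<noteq> 0)}"
  define pick where "pick i = (SOME j. j \<in> B i \<and> \<theta> j \<noteq> 0)" for i
  have pick: "pick i \<in> B i \<and> \<theta> (pick i) \<noteq> 0" if "i \<in> D" for i
  proof -
    from that obtain j where "j \<in> B i \<and> \<theta> j \<noteq> 0" unfolding D_def by auto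
    then show ?thesis unfolding pick_def by (rule someI)
  qed
  have "inj_on pick D"
  proof (rule inj_onI)
    fix i i' assume i: "i \<in> D" and i': "i' \<in> D" and eq: "pick i = pick i'"
    show "i = i'"
    proof (rule ccontr)
      assume "i \<noteq> i'"
      then have "B i \<inter> B i' = {}"
        using mom_partition_disjoint[OF part] i i' unfolding D_def disjoint_family_on_def by auto
      with pick[OF i] pick[OF i'] eq show False by auto
    qed
  qed
  moreover have "pick ` D \<subseteq> {j\<in>{0..<d}. \<theta> j \<noteq> 0}"
    using pick mom_partition_block(1)[OF part] unfolding D_def by fastforce
  ultimately have "card D \<le> card {j\<in>{0..<d}. \<theta> j \<noteq> 0}" by (intro card_inj_on_le) auto
  also have "\<dots> \<le> s" using sp unfolding sparse_def .
  finally have "card D \<le> s" .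
  moreover have "card (clean_blocks B m \<theta>) + card D = m"
  proof -
    have "finite (clean_blocks B m \<theta>)" "finite D" "clean_blocks B m \<theta> \<inter> D = {}"
      unfolding clean_blocks_def D_def by auto
    then have "card (clean_blocks B m \<theta>) + card D = card (clean_blocks B m \<theta> \<union> D)"
      by (rule card_Un_disjoint[symmetric])
    also have "clean_blocks B m \<theta> \<union> D = {..<m}" unfolding clean_blocks_def D_def by auto
    finally show ?thesis by simp
  qed
  ultimately show ?thesis by linarith
qed

lemma block_mean_clean:
  assumes "i \<in> clean_blocks B m \<theta>"
  shows "block_mean (B i) (\<lambda>j. (\<theta> j + \<sigma> * \<xi> j)\<^sup>2) = \<sigma>\<^sup>2 * block_mean (B i) (\<lambda>j. (\<xi> j)\<^sup>2)"
proof -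
  have "block_mean (B i) (\<lambda>j. (\<theta> j + \<sigma> * \<xi> j)\<^sup>2) = block_mean (B i) (\<lambda>j. \<sigma>\<^sup>2 * (\<xi> j)\<^sup>2)"
    using assms unfolding clean_blocks_def by (intro block_mean_cong) (simp add: power_mult_distrib)
  then show ?thesis by (simp add: block_mean_cmult)
qed

lemma mom_est_nonneg: "0 < m \<Longrightarrow> 0 \<le> mom_est B m Y"
  unfolding mom_est_eq_med_block_mean by (intro med_nonneg) (auto intro!: block_mean_nonneg)

text \<open>Dirty and atypical blocks together make up fewer than half of the blocks.\<close>
lemma mom_est_within_if_few_atypical:
  fixes B :: "nat \<Rightarrow> nat set" and m :: nat and \<theta> \<xi> :: "nat \<Rightarrow> real"
  defines "I \<equiv> clean_blocks B m \<theta>"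
  assumes dirty: "4 * (m - card I) < m" and \<sigma>: "0 < \<sigma>"
    and atypical: "4 * card {i\<in>I. block_mean (B i) (\<lambda>j. (\<xi> j)\<^sup>2) \<notin> {1/2..3/2}} < m"
  shows "1/2 \<le> mom_est B m (\<lambda>j. \<theta> j + \<sigma> * \<xi> j) / \<sigma>\<^sup>2
    \<and> mom_est B m (\<lambda>j. \<theta> j + \<sigma> * \<xi> j) / \<sigma>\<^sup>2 \<le> 3/2"
proof -
  define v where "v = (\<lambda>i. block_mean (B i) (\<lambda>j. (\<theta> j + \<sigma> * \<xi> j)\<^sup>2))"
  define A where "A = {i\<in>I. block_mean (B i) (\<lambda>j. (\<xi> j)\<^sup>2) \<notin> {1/2..3/2}}"
  have I: "I \<subseteq> {..<m}" unfolding I_def clean_blocks_def by auto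
  have "{i. i < m \<and> (v i < \<sigma>\<^sup>2/2 \<or> 3/2 * \<sigma>\<^sup>2 < v i)} \<subseteq> A \<union> ({..<m} - I)"
    using \<sigma> by (auto simp: A_def v_def I_def block_mean_clean field_simps)
  then have "card {i. i < m \<and> (v i < \<sigma>\<^sup>2/2 \<or> 3/2 * \<sigma>\<^sup>2 < v i)} \<le> card (A \<union> ({..<m} - I))"
    using I by (intro card_mono) (auto simp: A_def intro: finite_subset)
  also have "\<dots> \<le> card A + card ({..<m} - I)" by (rule card_Un_le)
  also have "card ({..<m} - I) = m - card I"
    using I by (simp add: card_Diff_subset finite_subset)
  finally have few: "2 * card {i. i < m \<and> (v i < \<sigma>\<^sup>2/2 \<or> 3/2 * \<sigma>\<^sup>2 < v i)} < m"
    using dirty atypical unfolding A_def by linarith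
  have "card {i. i < m \<and> v i < \<sigma>\<^sup>2/2} \<le> card {i. i < m \<and> (v i < \<sigma>\<^sup>2/2 \<or> 3/2 * \<sigma>\<^sup>2 < v i)}"
    "card {i. i < m \<and> 3/2 * \<sigma>\<^sup>2 < v i} \<le> card {i. i < m \<and> (v i < \<sigma>\<^sup>2/2 \<or> 3/2 * \<sigma>\<^sup>2 < v i)}"
    by (intro card_mono; auto)+
  with few have "\<sigma>\<^sup>2/2 \<le> med (map v [0..<m]) \<and> med (map v [0..<m]) \<le> 3/2 * \<sigma>\<^sup>2"
    by (intro conjI med_ge_if_few_below med_le_if_few_above;
        unfold length_filter_map_upt length_map length_upt diff_zero; linarith)
  then show ?thesis
    using \<sigma> by (simp add: mom_est_eq_med_block_mean v_def field_simps)
qed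

lemma mom_est_le_clean_sum:
  fixes B :: "nat \<Rightarrow> nat set" and m :: nat and \<theta> \<xi> :: "nat \<Rightarrow> real"
  defines "I \<equiv> clean_blocks B m \<theta>"
  assumes dirty: "4 * (m - card I) < m"
  shows "mom_est B m (\<lambda>j. \<theta> j + \<sigma> * \<xi> j) \<le> 4 * \<sigma>\<^sup>2 / m * (\<Sum>i\<in>I. block_mean (B i) (\<lambda>j. (\<xi> j)\<^sup>2))"
proof -
  have "mom_est B m (\<lambda>j. \<theta> j + \<sigma> * \<xi> j) \<le> 4 / m * (\<Sum>i\<in>I. block_mean (B i) (\<lambda>j. (\<theta> j + \<sigma> * \<xi> j)\<^sup>2))"
    unfolding mom_est_eq_med_block_mean
    by (rule med_le_four_mean_of_majority[OF _ _ dirty])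
      (auto simp: I_def clean_blocks_def intro!: block_mean_nonneg)
  also have "\<dots> = 4 * \<sigma>\<^sup>2 / m * (\<Sum>i\<in>I. block_mean (B i) (\<lambda>j. (\<xi> j)\<^sup>2))"
    unfolding I_def by (simp add: block_mean_clean sum_distrib_left[symmetric])
  finally show ?thesis .
qed

lemma mom_est_sq_le_clean_sum:
  fixes B :: "nat \<Rightarrow> nat set" and m :: nat and \<theta> \<xi> :: "nat \<Rightarrow> real"
  defines "I \<equiv> clean_blocks B m \<theta>"
  assumes dirty: "4 * (m - card I) < m"
  shows "(mom_est B m (\<lambda>j. \<theta> j + \<sigma> * \<xi> j))\<^sup>2 \<le> 16 * \<sigma>^4 / m * (\<Sum>i\<in>I. block_mean (B i) (\<lambda>j. (\<xi> j)^4))"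
proof -
  define q where "q i = block_mean (B i) (\<lambda>j. (\<xi> j)\<^sup>2)" for i
  have m: "0 < m" using dirty by simp
  have "I \<subseteq> {..<m}" unfolding I_def clean_blocks_def by auto
  then have card: "card I \<le> m" using card_mono[of "{..<m}" I] by simp
  have "(mom_est B m (\<lambda>j. \<theta> j + \<sigma> * \<xi> j))\<^sup>2 \<le> (4 * \<sigma>\<^sup>2 / m * (\<Sum>i\<in>I. q i))\<^sup>2"
    using mom_est_le_clean_sum[OF dirty[unfolded I_def]] mom_est_nonneg[OF m]
    unfolding q_def I_def by (intro power_mono) auto
  also have "\<dots> = 16 * \<sigma>^4 / m^2 * (\<Sum>i\<in>I. q i)\<^sup>2"
    by (simp add: power_mult_distrib power_divide flip: power_mult)
  also have "\<dots> \<le> 16 * \<sigma>^4 / m^2 * (m * (\<Sum>i\<in>I. (q i)\<^sup>2))"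
  proof (rule mult_left_mono)
    have "(\<Sum>i\<in>I. q i)\<^sup>2 \<le> (\<Sum>i\<in>I. (q i)\<^sup>2) * card I" by (rule sum_squared_le_sum_of_squares)
    also have "\<dots> \<le> (\<Sum>i\<in>I. (q i)\<^sup>2) * m" using card by (intro mult_left_mono sum_nonneg) auto
    finally show "(\<Sum>i\<in>I. q i)\<^sup>2 \<le> m * (\<Sum>i\<in>I. (q i)\<^sup>2)" by (simp add: mult.commute)
  qed (simp add: zero_le_even_power)
  also have "\<dots> = 16 * \<sigma>^4 / m * (\<Sum>i\<in>I. (q i)\<^sup>2)" using m by (simp add: power2_eq_square)
  also have "\<dots> \<le> 16 * \<sigma>^4 / m * (\<Sum>i\<in>I. block_mean (B i) (\<lambda>j. (\<xi> j)^4))"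
    using block_mean_square_le[of "B i" "\<lambda>j. (\<xi> j)\<^sup>2" for i]
    by (intro mult_left_mono sum_mono) (auto simp: q_def zero_le_even_power simp flip: power_mult)
  finally show ?thesis .
qed

lemma mom_partition_block_nonempty:
  assumes part: "mom_partition d m B" and "m \<le> d" and "i < m"
  shows "B i \<noteq> {}"
proof -
  have "0 < d div m" using assms by (simp add: div_greater_zero_iff)
  then show ?thesis using mom_partition_block(2)[OF assms(1,3)] by auto
qed

lemma block_count_bounds:
  fixes d N m :: nat
  assumes m: "m = nat \<lfloor>1 / real N * real d\<rfloor>" and "0 < m"
  shows "N \<le> d div m" and "m \<le> d" and "real d \<le> 2 * N * m"
proof -
  have m_div: "m = d div N" using m by (simp add: floor_divide_of_nat_eq)
  have "N \<noteq> 0" using assms m_div by (intro notI) simp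
  have "d div N * N \<le> d" by (rule div_times_less_eq_dividend)
  with \<open>0 < m\<close> show "N \<le> d div m" by (simp add: m_div less_eq_div_iff_mult_less_eq mult.commute)
  show "m \<le> d" by (simp add: m_div)
  have "d mod N < N" using \<open>N \<noteq> 0\<close> by simp
  moreover have "N \<le> d div N * N" using \<open>0 < m\<close> m_div by simp
  ultimately have "d \<le> 2 * (d div N * N)" using div_mult_mod_eq[of d N] by linarith
  then have "real d \<le> real (2 * (d div N * N))" by (simp only: of_nat_le_iff)
  then show "real d \<le> 2 * N * m" by (simp add: m_div ac_simps)
qed

section \<open>Counting independent rare events\<close>

lemma (in prob_space) expectation_indicator_preimage:
  fixes X :: "'a \<Rightarrow> real"
  assumes X: "random_variable borel X" and A: "A \<in> sets borel"
  shows "expectation (\<lambda>\<omega>. indicator A (X \<omega>) :: real) = prob {\<omega> \<in> space M. X \<omega> \<in> A}"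
proof -
  have "{\<omega> \<in> space M. X \<omega> \<in> A} \<in> events"
    using measurable_sets[OF X A] by (simp add: vimage_def Int_def conj_commute)
  moreover have "expectation (\<lambda>\<omega>. indicator A (X \<omega>) :: real)
      = expectation (indicator {\<omega> \<in> space M. X \<omega> \<in> A})"
    by (intro Bochner_Integration.integral_cong) (auto simp: indicator_def)
  ultimately show ?thesis by simp
qed

lemma (in prob_space) prob_card_less_ge:
  fixes X :: "'i \<Rightarrow> 'a \<Rightarrow> real" and p t :: real
  assumes I: "finite I" "I \<noteq> {}" and indep: "indep_vars (\<lambda>_. borel) X I"
    and A: "A \<in> sets borel" and p: "\<And>i. i \<in> I \<Longrightarrow> prob {\<omega> \<in> space M. X i \<omega> \<in> A} \<le> p"
    and n: "card I \<le> n" and t: "0 \<le> t"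
  shows "1 - exp (- 2 * t\<^sup>2 * n) \<le> prob {\<omega> \<in> space M. card {i\<in>I. X i \<omega> \<in> A} < n * (p + t)}"
proof -
  define W :: "'i \<Rightarrow> 'a \<Rightarrow> real" where "W i \<omega> = indicator A (X i \<omega>)" for i \<omega>
  have indep_W: "indep_vars (\<lambda>_. borel) W I"
    unfolding W_def using A by (intro indep_vars_compose2[OF indep]) auto
  interpret W: Hoeffding_ineq M I W "\<lambda>_. 0" "\<lambda>_. 1" "\<Sum>i\<in>I. expectation (W i)"
    by unfold_locales (simp_all add: W_def I(1) indep_W)
  have "expectation (W i) \<le> p" if "i \<in> I" for i
    using indep that p[OF that] A unfolding W_def indep_vars_def
    by (subst expectation_indicator_preimage) auto
  moreover have "0 \<le> p" using p I by (meson all_not_in_conv measure_nonneg order_trans)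
  ultimately have mean: "(\<Sum>i\<in>I. expectation (W i)) \<le> n * p"
    using sum_mono[of I "\<lambda>i. expectation (W i)" "\<lambda>_. p"] mult_right_mono[of "card I" n p] n by simp
  have count: "(\<Sum>i\<in>I. W i \<omega>) = card {i\<in>I. X i \<omega> \<in> A}" for \<omega>
    using I by (simp add: W_def indicator_def sum.If_cases Int_def)
  have bad: "{\<omega> \<in> space M. n * (p + t) \<le> (\<Sum>i\<in>I. W i \<omega>)} \<in> events"
    using W.random_variable by measurable
  have "prob {\<omega> \<in> space M. n * (p + t) \<le> (\<Sum>i\<in>I. W i \<omega>)}
      \<le> prob {\<omega> \<in> space M. (\<Sum>i\<in>I. expectation (W i)) + n * t \<le> (\<Sum>i\<in>I. W i \<omega>)}"
    using mean W.random_variable by (intro finite_measure_mono) (auto simp: algebra_simps)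
  also have "\<dots> \<le> exp (- 2 * (n * t)\<^sup>2 / (\<Sum>i\<in>I. (1 - 0)\<^sup>2))"
    using I t by (intro W.Hoeffding_ineq_ge) auto
  also have "\<dots> \<le> exp (- 2 * t\<^sup>2 * n)"
  proof -
    have "2 * t\<^sup>2 * n * card I \<le> 2 * t\<^sup>2 * n * n" using n t by (intro mult_left_mono) auto
    then show ?thesis using I n by (simp add: card_gt_0_iff field_simps power2_eq_square)
  qed
  finally have "prob {\<omega> \<in> space M. n * (p + t) \<le> (\<Sum>i\<in>I. W i \<omega>)} \<le> exp (- 2 * t\<^sup>2 * n)" .
  moreover have "{\<omega> \<in> space M. card {i\<in>I. X i \<omega> \<in> A} < n * (p + t)}
      = space M - {\<omega> \<in> space M. n * (p + t) \<le> (\<Sum>i\<in>I. W i \<omega>)}"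
    by (auto simp: count)
  ultimately show ?thesis using prob_compl[OF bad] by simp
qed

section \<open>Independent noise coordinates\<close>

lemma exp_minus_eight_le: "exp (- 8 :: real) \<le> 1/32"
proof -
  have "(3::real) ^ 4 \<le> exp 2 ^ 4" using exp_ge_add_one_self[of 2] by (intro power_mono) auto
  also have "exp 2 ^ 4 = exp (8::real)" by (simp flip: exp_of_nat_mult)
  finally show ?thesis by (simp add: exp_minus field_simps)
qed

locale iid_noise =
  fixes P :: "real measure" and d :: nat
  assumes prob_space_P: "prob_space P" and sets_P [measurable_cong]: "sets P = sets borel"
    and integrable_square: "integrable P (\<lambda>x. x\<^sup>2)" and second_moment: "(\<integral>x. x\<^sup>2 \<partial>P) = 1"
begin

abbreviation M :: "(nat \<Rightarrow> real) measure" where "M \<equiv> PiM {0..<d} (\<lambda>_. P)"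

sublocale M: prob_space M
  by (rule prob_space_PiM) (rule prob_space_P)

lemma measurable_coordinate: "j < d \<Longrightarrow> (\<lambda>\<xi>. \<xi> j) \<in> measurable M P"
  by (auto intro: measurable_component_singleton)

lemma borel_measurable_coordinate [measurable]: "j < d \<Longrightarrow> (\<lambda>\<xi>. \<xi> j) \<in> borel_measurable M"
  using measurable_coordinate by (simp add: measurable_cong_sets[OF refl sets_P])

lemma distr_coordinate: "j < d \<Longrightarrow> distr M P (\<lambda>\<xi>. \<xi> j) = P"
  by (rule distr_PiM_component) (auto simp: prob_space_P)

lemma integrable_coordinate:
  fixes f :: "real \<Rightarrow> real"
  assumes "j < d" and "integrable P f"
  shows "integrable M (\<lambda>\<xi>. f (\<xi> j))"
proof -
  have f: "f \<in> borel_measurable P" using assms(2) by (rule borel_measurable_integrable)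
  have "integrable (distr M P (\<lambda>\<xi>. \<xi> j)) f" using assms by (simp add: distr_coordinate)
  then show ?thesis using integrable_distr_eq[OF measurable_coordinate[OF assms(1)] f] by simp
qed

lemma integral_coordinate:
  fixes f :: "real \<Rightarrow> real"
  assumes "j < d" and "f \<in> borel_measurable borel"
  shows "(\<integral>\<xi>. f (\<xi> j) \<partial>M) = (\<integral>x. f x \<partial>P)"
proof -
  have "(\<integral>x. f x \<partial>P) = (\<integral>x. f x \<partial>distr M P (\<lambda>\<xi>. \<xi> j))" using assms by (simp add: distr_coordinate)
  also have "\<dots> = (\<integral>\<xi>. f (\<xi> j) \<partial>M)"
    using assms measurable_coordinate by (intro integral_distr) (auto simp: measurable_cong_sets[OF sets_P])
  finally show ?thesis by simp
qed

lemma indep_coordinates: "M.indep_vars (\<lambda>_. borel) (\<lambda>j \<xi>. \<xi> j) {0..<d}"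
proof (cases "d = 0")
  case False
  have "M.indep_vars (\<lambda>_. P) (\<lambda>j \<xi>. \<xi> j) {0..<d}"
  proof (subst M.indep_vars_iff_distr_eq_PiM')
    have "distr M (\<Pi>\<^sub>M j\<in>{0..<d}. P) (\<lambda>\<xi>. \<lambda>j\<in>{0..<d}. \<xi> j) = distr M M (\<lambda>\<xi>. \<xi>)"
      by (intro distr_cong) (auto simp: space_PiM PiE_def extensional_def fun_eq_iff)
    also have "\<dots> = (\<Pi>\<^sub>M j\<in>{0..<d}. distr M P (\<lambda>\<xi>. \<xi> j))"
      by (auto intro!: PiM_cong simp: distr_coordinate)
    finally show "distr M (\<Pi>\<^sub>M j\<in>{0..<d}. P) (\<lambda>\<xi>. \<lambda>j\<in>{0..<d}. \<xi> j)
        = (\<Pi>\<^sub>M j\<in>{0..<d}. distr M P (\<lambda>\<xi>. \<xi> j))" .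
  qed (use False measurable_coordinate in auto)
  then show ?thesis
    by (rule M.indep_vars_compose2[where Y="\<lambda>_ x. x", simplified])
      (simp add: measurable_cong_sets[OF sets_P refl])
next
  case True
  then show ?thesis
    unfolding M.indep_vars_def M.indep_sets_finite_index_sets[of _ "{0..<d}"] by auto
qed

lemma indep_block_means:
  assumes disj: "disjoint_family_on B I" and sub: "\<And>i. i \<in> I \<Longrightarrow> B i \<subseteq> {0..<d}"
  shows "M.indep_vars (\<lambda>_. borel) (\<lambda>i \<xi>. block_mean (B i) (\<lambda>j. (\<xi> j)\<^sup>2)) I"
proof -
  have "M.indep_vars (\<lambda>i. PiM (B i) (\<lambda>_. borel)) (\<lambda>i \<xi>. restrict (\<lambda>j. \<xi> j) (B i)) I"
    using sub disj by (intro M.indep_vars_restrict[OF indep_coordinates]) auto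
  moreover have "(\<lambda>y. block_mean (B i) (\<lambda>j. (y j)\<^sup>2)) \<in> borel_measurable (PiM (B i) (\<lambda>_. borel))"
    for i unfolding block_mean_def by measurable
  ultimately have "M.indep_vars (\<lambda>_. borel)
      (\<lambda>i \<xi>. block_mean (B i) (\<lambda>j. (restrict (\<lambda>j. \<xi> j) (B i) j)\<^sup>2)) I"
    by (rule M.indep_vars_compose2)
  moreover have "block_mean (B i) (\<lambda>j. (restrict (\<lambda>j. \<xi> j) (B i) j)\<^sup>2) = block_mean (B i) (\<lambda>j. (\<xi> j)\<^sup>2)"
    for i \<xi> by (rule block_mean_cong) simp
  ultimately show ?thesis by simp
qed

lemma borel_measurable_mom_est:
  assumes part: "mom_partition d m B" and m: "0 < m"
  shows "(\<lambda>\<xi>. mom_est B m (\<lambda>j. \<theta> j + \<sigma> * \<xi> j)) \<in> borel_measurable M"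
proof -
  have "(\<lambda>\<xi>. block_mean (B i) (\<lambda>j. (\<theta> j + \<sigma> * \<xi> j)\<^sup>2)) \<in> borel_measurable M" if "i < m" for i
    using mom_partition_block(1)[OF part that] unfolding block_mean_def
    by (intro borel_measurable_divide borel_measurable_sum) auto
  then show ?thesis unfolding mom_est_eq_med_block_mean using m by (rule borel_measurable_med)
qed

lemma integrable_block_mean:
  fixes f :: "real \<Rightarrow> real"
  assumes "S \<subseteq> {0..<d}" and "integrable P f"
  shows "integrable M (\<lambda>\<xi>. block_mean S (\<lambda>j. f (\<xi> j)))"
  using assms unfolding block_mean_def by (intro integrable_divide Bochner_Integration.integrable_sum integrable_coordinate) auto

lemma integral_block_mean:
  fixes f :: "real \<Rightarrow> real"
  assumes S: "S \<subseteq> {0..<d}" "S \<noteq> {}" and f: "integrable P f"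
  shows "(\<integral>\<xi>. block_mean S (\<lambda>j. f (\<xi> j)) \<partial>M) = (\<integral>x. f x \<partial>P)"
proof -
  have fin: "finite S" using S(1) finite_subset by blast
  have "(\<integral>\<xi>. f (\<xi> j) \<partial>M) = (\<integral>x. f x \<partial>P)" if "j \<in> S" for j
    using S(1) that f by (intro integral_coordinate) auto
  then show ?thesis
    using S f fin unfolding block_mean_def
    by (simp add: Bochner_Integration.integral_sum integrable_coordinate subset_iff card_gt_0_iff)
qed

lemma integral_sum_block_means:
  fixes f :: "real \<Rightarrow> real"
  assumes part: "mom_partition d m B" and md: "m \<le> d" and I: "I \<subseteq> {..<m}" and f: "integrable P f"
  shows "integrable M (\<lambda>\<xi>. \<Sum>i\<in>I. block_mean (B i) (\<lambda>j. f (\<xi> j)))"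
    and "(\<integral>\<xi>. (\<Sum>i\<in>I. block_mean (B i) (\<lambda>j. f (\<xi> j))) \<partial>M) = card I * (\<integral>x. f x \<partial>P)"
proof -
  have block: "B i \<subseteq> {0..<d}" "B i \<noteq> {}" if "i \<in> I" for i
    using that I mom_partition_block(1)[OF part] mom_partition_block_nonempty[OF part md] by auto
  then have int: "integrable M (\<lambda>\<xi>. block_mean (B i) (\<lambda>j. f (\<xi> j)))" if "i \<in> I" for i
    using that f by (intro integrable_block_mean) auto
  then show "integrable M (\<lambda>\<xi>. \<Sum>i\<in>I. block_mean (B i) (\<lambda>j. f (\<xi> j)))" by auto
  have "(\<integral>\<xi>. block_mean (B i) (\<lambda>j. f (\<xi> j)) \<partial>M) = (\<integral>x. f x \<partial>P)" if "i \<in> I" for i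
    using block[OF that] f by (rule integral_block_mean)
  then show "(\<integral>\<xi>. (\<Sum>i\<in>I. block_mean (B i) (\<lambda>j. f (\<xi> j))) \<partial>M) = card I * (\<integral>x. f x \<partial>P)"
    using int by (simp add: Bochner_Integration.integral_sum)
qed

lemma integrable_min_square: "0 \<le> L \<Longrightarrow> integrable P (\<lambda>x. min (x\<^sup>2) L)"
  by (rule Bochner_Integration.integrable_bound[OF integrable_square])
    (auto simp: measurable_cong_sets[OF sets_P])

lemma prob_truncated_block_sum_deviation_le:
  assumes S: "S \<subseteq> {0..<d}" "S \<noteq> {}" and L: "0 < L"
  shows "M.prob {\<xi> \<in> space M.
      card S / 4 \<le> \<bar>(\<Sum>j\<in>S. min ((\<xi> j)\<^sup>2) L) - card S * (\<integral>x. min (x\<^sup>2) L \<partial>P)\<bar>}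
    \<le> 2 * exp (- card S / (8 * L\<^sup>2))"
proof -
  define Z where "Z j \<xi> = min ((\<xi> j)\<^sup>2) L" for j and \<xi> :: "nat \<Rightarrow> real"
  have fin: "finite S" using S(1) finite_subset by blast
  have "M.indep_vars (\<lambda>_. borel) (\<lambda>j \<xi>. (\<lambda>x. min (x\<^sup>2) L) (\<xi> j)) S"
    by (rule M.indep_vars_compose2[OF M.indep_vars_subset[OF indep_coordinates S(1)]]) auto
  then have indep: "M.indep_vars (\<lambda>_. borel) Z S" unfolding Z_def .
  interpret Z: Hoeffding_ineq M S Z "\<lambda>_. 0" "\<lambda>_. L" "\<Sum>j\<in>S. M.expectation (Z j)"
    using L by unfold_locales (simp_all add: Z_def fin indep)
  have "M.expectation (Z j) = (\<integral>x. min (x\<^sup>2) L \<partial>P)" if "j \<in> S" for j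
    using S(1) that unfolding Z_def by (intro integral_coordinate) auto
  then have "(\<Sum>j\<in>S. M.expectation (Z j)) = card S * (\<integral>x. min (x\<^sup>2) L \<partial>P)" by simp
  moreover have "2 * (card S / 4)\<^sup>2 / (\<Sum>j\<in>S. (L - 0)\<^sup>2) = card S / (8 * L\<^sup>2)"
    using fin S(2) L by (simp add: power2_eq_square field_simps)
  moreover have "0 < (\<Sum>j\<in>S. (L - 0)\<^sup>2)" using fin S(2) L by (simp add: card_gt_0_iff)
  ultimately show ?thesis
    using Z.Hoeffding_ineq_abs_ge[of "card S / 4"] by (simp add: Z_def)
qed

lemma prob_block_sum_truncation_error_le:
  assumes S: "S \<subseteq> {0..<d}" "S \<noteq> {}" and L: "0 \<le> L"
  shows "M.prob {\<xi> \<in> space M. card S / 4 \<le> (\<Sum>j\<in>S. (\<xi> j)\<^sup>2 - min ((\<xi> j)\<^sup>2) L)}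
    \<le> 4 * (\<integral>x. x\<^sup>2 - min (x\<^sup>2) L \<partial>P)"
proof -
  have fin: "finite S" using S(1) finite_subset by blast
  then have k: "0 < real (card S)" using S(2) by (simp add: card_gt_0_iff)
  have "integrable P (\<lambda>x. x\<^sup>2 - min (x\<^sup>2) L)"
    using integrable_square integrable_min_square[OF L] by (rule Bochner_Integration.integrable_diff)
  then have int: "integrable M (\<lambda>\<xi>. (\<xi> j)\<^sup>2 - min ((\<xi> j)\<^sup>2) L)" if "j \<in> S" for j
    using S(1) that by (intro integrable_coordinate[where f="\<lambda>x. x\<^sup>2 - min (x\<^sup>2) L"]) auto
  have "M.prob {\<xi> \<in> space M. card S / 4 \<le> (\<Sum>j\<in>S. (\<xi> j)\<^sup>2 - min ((\<xi> j)\<^sup>2) L)}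
      \<le> (\<integral>\<xi>. (\<Sum>j\<in>S. (\<xi> j)\<^sup>2 - min ((\<xi> j)\<^sup>2) L) \<partial>M) / (card S / 4)"
    using int k by (intro integral_Markov_inequality_measure[where A="space M"])
      (auto intro!: sum_nonneg)
  also have "(\<integral>\<xi>. (\<Sum>j\<in>S. (\<xi> j)\<^sup>2 - min ((\<xi> j)\<^sup>2) L) \<partial>M)
      = (\<Sum>j\<in>S. \<integral>\<xi>. (\<xi> j)\<^sup>2 - min ((\<xi> j)\<^sup>2) L \<partial>M)"
    using int by (rule Bochner_Integration.integral_sum)
  also have "\<dots> = card S * (\<integral>x. x\<^sup>2 - min (x\<^sup>2) L \<partial>P)"
  proof -
    have "(\<integral>\<xi>. (\<xi> j)\<^sup>2 - min ((\<xi> j)\<^sup>2) L \<partial>M) = (\<integral>x. x\<^sup>2 - min (x\<^sup>2) L \<partial>P)" if "j \<in> S" for j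
      using S(1) that by (intro integral_coordinate[where f="\<lambda>x. x\<^sup>2 - min (x\<^sup>2) L"]) auto
    then show ?thesis by simp
  qed
  finally show ?thesis using k by simp
qed

lemma prob_block_mean_atypical_le:
  assumes S: "S \<subseteq> {0..<d}" "S \<noteq> {}" and l: "0 < l"
    and trunc: "(\<integral>x. x\<^sup>2 - min (x\<^sup>2) (l\<^sup>2) \<partial>P) \<le> 1/64" and large: "64 * l^4 \<le> card S"
  shows "M.prob {\<xi> \<in> space M. block_mean S (\<lambda>j. (\<xi> j)\<^sup>2) \<notin> {1/2..3/2}} \<le> 1/8"
proof -
  define k where "k = real (card S)"
  define \<mu> where "\<mu> = (\<integral>x. min (x\<^sup>2) (l\<^sup>2) \<partial>P)"
  define T where "T \<xi> = (\<Sum>j\<in>S. min ((\<xi> j)\<^sup>2) (l\<^sup>2))" for \<xi> :: "nat \<Rightarrow> real"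
  define R where "R \<xi> = (\<Sum>j\<in>S. (\<xi> j)\<^sup>2 - min ((\<xi> j)\<^sup>2) (l\<^sup>2))" for \<xi> :: "nat \<Rightarrow> real"
  have k: "0 < k" using S finite_subset[OF S(1)] by (simp add: k_def card_gt_0_iff)
  have "1 - \<mu> = (\<integral>x. x\<^sup>2 - min (x\<^sup>2) (l\<^sup>2) \<partial>P)"
    using Bochner_Integration.integral_diff[OF integrable_square integrable_min_square[OF zero_le_power2]]
    by (simp add: \<mu>_def second_moment)
  moreover have "0 \<le> (\<integral>x. x\<^sup>2 - min (x\<^sup>2) (l\<^sup>2) \<partial>P)" by (intro integral_nonneg_AE) auto
  ultimately have "63/64 \<le> \<mu>" "\<mu> \<le> 1" using trunc by linarith+
  then have k\<mu>: "63/64 * k \<le> k * \<mu>" "k * \<mu> \<le> k" using k by auto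
  have "{\<xi> \<in> space M. block_mean S (\<lambda>j. (\<xi> j)\<^sup>2) \<notin> {1/2..3/2}}
      \<subseteq> {\<xi> \<in> space M. k / 4 \<le> \<bar>T \<xi> - k * \<mu>\<bar>} \<union> {\<xi> \<in> space M. k / 4 \<le> R \<xi>}"
  proof safe
    fix \<xi> assume "block_mean S (\<lambda>j. (\<xi> j)\<^sup>2) \<notin> {1/2..3/2}" and "\<not> k / 4 \<le> R \<xi>"
    then have "k * block_mean S (\<lambda>j. (\<xi> j)\<^sup>2) < k * (1/2) \<or> k * (3/2) < k * block_mean S (\<lambda>j. (\<xi> j)\<^sup>2)"
      using k by auto
    moreover have "T \<xi> + R \<xi> = k * block_mean S (\<lambda>j. (\<xi> j)\<^sup>2)"
      using k by (simp add: T_def R_def k_def block_mean_def sum.distrib[symmetric])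
    moreover have "0 \<le> R \<xi>" unfolding R_def by (intro sum_nonneg) auto
    ultimately show "k / 4 \<le> \<bar>T \<xi> - k * \<mu>\<bar>"
      using k\<mu> \<open>\<not> k / 4 \<le> R \<xi>\<close> by linarith
  qed
  moreover have "{\<xi> \<in> space M. k / 4 \<le> \<bar>T \<xi> - k * \<mu>\<bar>} \<in> M.events"
    "{\<xi> \<in> space M. k / 4 \<le> R \<xi>} \<in> M.events"
    using S(1) unfolding T_def R_def by (measurable; auto)+
  ultimately have "M.prob {\<xi> \<in> space M. block_mean S (\<lambda>j. (\<xi> j)\<^sup>2) \<notin> {1/2..3/2}}
      \<le> M.prob {\<xi> \<in> space M. k / 4 \<le> \<bar>T \<xi> - k * \<mu>\<bar>} + M.prob {\<xi> \<in> space M. k / 4 \<le> R \<xi>}"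
    by (intro order_trans[OF M.finite_measure_mono measure_Un_le]) auto
  also have "\<dots> \<le> 2 * exp (- k / (8 * (l\<^sup>2)\<^sup>2)) + 4 * (1/64)"
    using prob_truncated_block_sum_deviation_le[OF S, of "l\<^sup>2"]
      prob_block_sum_truncation_error_le[OF S, of "l\<^sup>2"] l trunc
    unfolding k_def \<mu>_def T_def R_def by (intro add_mono) auto
  also have "exp (- k / (8 * (l\<^sup>2)\<^sup>2)) \<le> exp (- 8)"
    using large l unfolding k_def by (simp add: field_simps flip: power_mult)
  finally show ?thesis using exp_minus_eight_le by simp
qed

end

section \<open>Guarantees for the median-of-means estimator\<close>

lemma nn_integral_le_integral_bound:
  fixes f g :: "'a \<Rightarrow> real"
  assumes "integrable N g" and "\<And>x. x \<in> space N \<Longrightarrow> f x \<le> g x" and "\<And>x. x \<in> space N \<Longrightarrow> 0 \<le> g x"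
  shows "(\<integral>\<^sup>+x. ennreal (f x) \<partial>N) \<le> ennreal (\<integral>x. g x \<partial>N)"
proof -
  have "(\<integral>\<^sup>+x. ennreal (f x) \<partial>N) \<le> (\<integral>\<^sup>+x. ennreal (g x) \<partial>N)"
    using assms(2) by (intro nn_integral_mono ennreal_leI)
  also have "\<dots> = ennreal (\<integral>x. g x \<partial>N)"
    using assms(1,3) by (intro nn_integral_eq_integral) auto
  finally show ?thesis .
qed

context iid_noise
begin

lemma prob_mom_est_within:
  fixes \<theta> :: "nat \<Rightarrow> real" and l :: real
  assumes part: "mom_partition d m B" and sp: "sparse d s \<theta>" and s: "4 * s < m" and \<sigma>: "0 < \<sigma>"
    and l: "0 < l" and trunc: "(\<integral>x. x\<^sup>2 - min (x\<^sup>2) (l\<^sup>2) \<partial>P) \<le> 1/64"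
    and large: "64 * l^4 \<le> d div m"
  shows "1 - exp (- m / 32) \<le> M.prob {\<xi> \<in> space M. 1/2 \<le> mom_est B m (\<lambda>j. \<theta> j + \<sigma> * \<xi> j) / \<sigma>\<^sup>2
    \<and> mom_est B m (\<lambda>j. \<theta> j + \<sigma> * \<xi> j) / \<sigma>\<^sup>2 \<le> 3/2}" (is "_ \<le> M.prob ?E")
proof -
  define I where "I = clean_blocks B m \<theta>"
  define X where "X i \<xi> = block_mean (B i) (\<lambda>j. (\<xi> j)\<^sup>2)" for i and \<xi> :: "nat \<Rightarrow> real"
  have I: "finite I" "I \<subseteq> {..<m}" unfolding I_def clean_blocks_def by auto
  have dirty: "4 * (m - card I) < m" using card_clean_blocks_ge[OF part sp] s unfolding I_def by linarith
  then have "I \<noteq> {}" by auto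
  have block: "B i \<subseteq> {0..<d}" "B i \<noteq> {}" "64 * l^4 \<le> card (B i)" if "i \<in> I" for i
  proof -
    show "B i \<subseteq> {0..<d}" using that I(2) mom_partition_block(1)[OF part] by auto
    show large_i: "64 * l^4 \<le> card (B i)"
      using that I(2) mom_partition_block(2)[OF part] large by (meson lessThan_iff of_nat_le_iff order_trans subsetD)
    show "B i \<noteq> {}" using large_i l by auto
  qed
  have atypical: "M.prob {\<xi> \<in> space M. X i \<xi> \<in> - {1/2..3/2}} \<le> 1/8" if "i \<in> I" for i
    using prob_block_mean_atypical_le[OF block(1,2)[OF that] l trunc block(3)[OF that]] by (simp add: X_def)
  have indep: "M.indep_vars (\<lambda>_. borel) X I"
    unfolding X_def using mom_partition_disjoint[OF part] I(2) block(1)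
    by (intro indep_block_means) (auto intro: disjoint_family_on_mono)
  have "1 - exp (- 2 * (1/8)\<^sup>2 * m) \<le> M.prob {\<xi> \<in> space M. card {i\<in>I. X i \<xi> \<in> - {1/2..3/2}} < m * (1/8 + 1/8)}"
    using atypical card_mono[OF _ I(2)] by (intro M.prob_card_less_ge[OF I(1) \<open>I \<noteq> {}\<close> indep]) auto
  also have "\<dots> \<le> M.prob ?E"
  proof (rule M.finite_measure_mono)
    show "{\<xi> \<in> space M. card {i\<in>I. X i \<xi> \<in> - {1/2..3/2}} < m * (1/8 + 1/8)} \<subseteq> ?E"
      using mom_est_within_if_few_atypical[OF dirty[unfolded I_def] \<sigma>] by (auto simp: X_def I_def)
    have "0 < m" using s by simp
    note [measurable] = borel_measurable_mom_est[OF part this, of \<theta> \<sigma>]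
    show "?E \<in> M.events" by measurable
  qed
  finally show ?thesis by (simp add: power2_eq_square)
qed

lemma nn_integral_abs_mom_est_error_le:
  fixes \<theta> :: "nat \<Rightarrow> real"
  assumes part: "mom_partition d m B" and sp: "sparse d s \<theta>" and s: "4 * s < m" and md: "m \<le> d"
  shows "(\<integral>\<^sup>+\<xi>. ennreal \<bar>mom_est B m (\<lambda>j. \<theta> j + \<sigma> * \<xi> j) - \<sigma>\<^sup>2\<bar> \<partial>M) \<le> ennreal (5 * \<sigma>\<^sup>2)"
proof -
  define I where "I = clean_blocks B m \<theta>"
  define S where "S \<xi> = (\<Sum>i\<in>I. block_mean (B i) (\<lambda>j. (\<xi> j)\<^sup>2))" for \<xi> :: "nat \<Rightarrow> real"
  have m: "0 < m" using s by simp
  have I: "I \<subseteq> {..<m}" unfolding I_def clean_blocks_def by auto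
  have dirty: "4 * (m - card I) < m" using card_clean_blocks_ge[OF part sp] s unfolding I_def by linarith
  have S: "0 \<le> S \<xi>" for \<xi> unfolding S_def by (intro sum_nonneg block_mean_nonneg) auto
  have "\<bar>mom_est B m (\<lambda>j. \<theta> j + \<sigma> * \<xi> j) - \<sigma>\<^sup>2\<bar> \<le> 4 * \<sigma>\<^sup>2 / m * S \<xi> + \<sigma>\<^sup>2" for \<xi>
    using mom_est_le_clean_sum[OF dirty[unfolded I_def], of \<sigma> \<xi>] mom_est_nonneg[OF m] S[of \<xi>]
    unfolding S_def I_def abs_le_iff by (smt (verit) zero_le_power2 divide_nonneg_nonneg mult_nonneg_nonneg)
  then have "(\<integral>\<^sup>+\<xi>. ennreal \<bar>mom_est B m (\<lambda>j. \<theta> j + \<sigma> * \<xi> j) - \<sigma>\<^sup>2\<bar> \<partial>M)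
      \<le> ennreal (\<integral>\<xi>. 4 * \<sigma>\<^sup>2 / m * S \<xi> + \<sigma>\<^sup>2 \<partial>M)"
    using S integral_sum_block_means(1)[OF part md I integrable_square]
    by (intro nn_integral_le_integral_bound) (auto simp: S_def)
  also have "(\<integral>\<xi>. 4 * \<sigma>\<^sup>2 / m * S \<xi> + \<sigma>\<^sup>2 \<partial>M) = 4 * \<sigma>\<^sup>2 / m * card I + \<sigma>\<^sup>2"
    using integral_sum_block_means[OF part md I integrable_square]
    by (simp add: S_def second_moment M.prob_space)
  also have "\<dots> \<le> 5 * \<sigma>\<^sup>2"
    using card_mono[OF _ I] m by (simp add: field_simps mult_right_mono)
  finally show ?thesis by (simp add: ennreal_leI)
qed

lemma nn_integral_sq_mom_est_error_le:
  fixes \<theta> :: "nat \<Rightarrow> real"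
  assumes part: "mom_partition d m B" and sp: "sparse d s \<theta>" and s: "4 * s < m" and md: "m \<le> d"
    and int4: "integrable P (\<lambda>x. x^4)" and K: "(\<integral>x. x^4 \<partial>P) \<le> K"
  shows "(\<integral>\<^sup>+\<xi>. ennreal ((mom_est B m (\<lambda>j. \<theta> j + \<sigma> * \<xi> j) - \<sigma>\<^sup>2)\<^sup>2) \<partial>M)
    \<le> ennreal ((16 * K + 1) * \<sigma>^4)"
proof -
  define I where "I = clean_blocks B m \<theta>"
  define S where "S \<xi> = (\<Sum>i\<in>I. block_mean (B i) (\<lambda>j. (\<xi> j)^4))" for \<xi> :: "nat \<Rightarrow> real"
  have m: "0 < m" using s by simp
  have I: "I \<subseteq> {..<m}" unfolding I_def clean_blocks_def by auto
  have dirty: "4 * (m - card I) < m" using card_clean_blocks_ge[OF part sp] s unfolding I_def by linarith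
  have S: "0 \<le> S \<xi>" for \<xi> unfolding S_def by (intro sum_nonneg block_mean_nonneg) (auto simp: zero_le_even_power)
  have "(mom_est B m (\<lambda>j. \<theta> j + \<sigma> * \<xi> j) - \<sigma>\<^sup>2)\<^sup>2 \<le> 16 * \<sigma>^4 / m * S \<xi> + \<sigma>^4" for \<xi>
  proof -
    have "0 \<le> mom_est B m (\<lambda>j. \<theta> j + \<sigma> * \<xi> j) * \<sigma>\<^sup>2" using mom_est_nonneg[OF m] by simp
    then have "(mom_est B m (\<lambda>j. \<theta> j + \<sigma> * \<xi> j) - \<sigma>\<^sup>2)\<^sup>2 \<le> (mom_est B m (\<lambda>j. \<theta> j + \<sigma> * \<xi> j))\<^sup>2 + \<sigma>^4"
      by (simp add: power2_diff mult.commute flip: power_mult)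
    then show ?thesis using mom_est_sq_le_clean_sum[OF dirty[unfolded I_def], of \<sigma> \<xi>]
      unfolding S_def I_def by simp
  qed
  then have "(\<integral>\<^sup>+\<xi>. ennreal ((mom_est B m (\<lambda>j. \<theta> j + \<sigma> * \<xi> j) - \<sigma>\<^sup>2)\<^sup>2) \<partial>M)
      \<le> ennreal (\<integral>\<xi>. 16 * \<sigma>^4 / m * S \<xi> + \<sigma>^4 \<partial>M)"
    using S integral_sum_block_means(1)[OF part md I int4]
    by (intro nn_integral_le_integral_bound) (auto simp: S_def zero_le_even_power)
  also have "(\<integral>\<xi>. 16 * \<sigma>^4 / m * S \<xi> + \<sigma>^4 \<partial>M) = 16 * \<sigma>^4 / m * (card I * (\<integral>x. x^4 \<partial>P)) + \<sigma>^4"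
    using integral_sum_block_means[OF part md I int4] by (simp add: S_def M.prob_space)
  also have "\<dots> \<le> 16 * \<sigma>^4 / m * (m * K) + \<sigma>^4"
  proof -
    have "0 \<le> (\<integral>x. x^4 \<partial>P)" by (intro integral_nonneg_AE) (simp add: zero_le_even_power)
    then have "card I * (\<integral>x. x^4 \<partial>P) \<le> m * K"
      using card_mono[OF _ I] K by (intro mult_mono) auto
    then show ?thesis by (intro add_right_mono mult_left_mono) (auto simp: zero_le_even_power)
  qed
  also have "\<dots> = (16 * K + 1) * \<sigma>^4" using m by (simp add: algebra_simps)
  finally show ?thesis by (simp add: ennreal_leI)
qed

end

lemma noise_class_iid_noise: "noise_class a \<tau> P \<Longrightarrow> iid_noise P"
  unfolding noise_class_def iid_noise_def by auto

theorem proposition1: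
  fixes a \<tau> :: real
  assumes "\<tau> > 0" and "a > 2"
  shows "\<exists>\<gamma> c C :: real. 0 < \<gamma> \<and> \<gamma> \<le> 1/2 \<and> c > 0 \<and> C > 0 \<and>
    (\<forall>(s::nat) (d::nat) (m::nat) B. m = nat \<lfloor>\<gamma> * real d\<rfloor> \<longrightarrow> mom_partition d m B \<longrightarrow>
       1 \<le> s \<longrightarrow> real s < real m / 4 \<longrightarrow>
       (\<forall>P \<sigma> \<theta>. noise_class a \<tau> P \<longrightarrow> \<sigma> > 0 \<longrightarrow> sparse d s \<theta> \<longrightarrow>
          (let M = PiM {0..<d} (\<lambda>_. P);
               est = (\<lambda>\<xi>. mom_est B m (\<lambda>j. \<theta> j + \<sigma> * \<xi> j)) in
           measure M {\<xi> \<in> space M. 1/2 \<le> est \<xi> / \<sigma>\<^sup>2 \<and> est \<xi> / \<sigma>\<^sup>2 \<le> 3/2}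
              \<ge> 1 - exp (- c * real d) \<and>
           (\<integral>\<^sup>+ \<xi>. ennreal \<bar>est \<xi> - \<sigma>\<^sup>2\<bar> \<partial>M) \<le> ennreal (C * \<sigma>\<^sup>2) \<and>
           (a > 4 \<longrightarrow> (\<integral>\<^sup>+ \<xi>. ennreal ((est \<xi> - \<sigma>\<^sup>2)\<^sup>2) \<partial>M) \<le> ennreal (C * \<sigma>^4)))))"
proof -
  obtain l where l: "0 < l" and trunc: "\<And>P. noise_class a \<tau> P \<Longrightarrow> (\<integral>x. x\<^sup>2 - min (x\<^sup>2) (l\<^sup>2) \<partial>P) \<le> 1/64"
    using noise_class_truncation_level[OF assms] by blast
  define N :: nat where "N = nat \<lceil>64 * l^4\<rceil> + 2"
  define K where "K = 16 + 16 * 2 powr (4 - a) * \<tau> powr a / (1 - 2 powr (4 - a))"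
  define C where "C = max 5 (16 * K + 1)"
  have N: "2 \<le> N" "64 * l^4 \<le> N" unfolding N_def by linarith+
  show ?thesis
  proof (rule exI[of _ "1 / real N"], rule exI[of _ "1 / (64 * real N)"], rule exI[of _ C],
      intro conjI allI impI)
    fix s d m :: nat and B :: "nat \<Rightarrow> nat set" and P :: "real measure" and \<sigma> :: real
      and \<theta> :: "nat \<Rightarrow> real"
    assume m: "m = nat \<lfloor>1 / real N * real d\<rfloor>" and part: "mom_partition d m B" and "1 \<le> s"
      and s: "real s < real m / 4" and nc: "noise_class a \<tau> P" and \<sigma>: "\<sigma> > 0" and sp: "sparse d s \<theta>"
    interpret iid_noise P d using nc by (rule noise_class_iid_noise)
    have s4: "4 * s < m" using s by linarith
    have "0 < m" using s4 by simp
    note blocks = block_count_bounds[OF m this]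
    have large: "64 * l^4 \<le> d div m" using N(2) blocks(1) by (simp add: order_trans)
    have "exp (- real m / 32) \<le> exp (- (1 / (64 * real N)) * d)"
      using blocks(3) N(1) by (simp add: field_simps)
    then have "1 - exp (- (1 / (64 * real N)) * d) \<le> M.prob {\<xi> \<in> space M.
        1/2 \<le> mom_est B m (\<lambda>j. \<theta> j + \<sigma> * \<xi> j) / \<sigma>\<^sup>2 \<and> mom_est B m (\<lambda>j. \<theta> j + \<sigma> * \<xi> j) / \<sigma>\<^sup>2 \<le> 3/2}"
      using prob_mom_est_within[OF part sp s4 \<sigma> l trunc[OF nc] large] by linarith
    moreover have "(\<integral>\<^sup>+\<xi>. ennreal \<bar>mom_est B m (\<lambda>j. \<theta> j + \<sigma> * \<xi> j) - \<sigma>\<^sup>2\<bar> \<partial>M) \<le> ennreal (C * \<sigma>\<^sup>2)"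
      by (rule order_trans[OF nn_integral_abs_mom_est_error_le[OF part sp s4 blocks(2)]])
        (auto simp: C_def intro!: ennreal_leI mult_right_mono)
    moreover have "(\<integral>\<^sup>+\<xi>. ennreal ((mom_est B m (\<lambda>j. \<theta> j + \<sigma> * \<xi> j) - \<sigma>\<^sup>2)\<^sup>2) \<partial>M) \<le> ennreal (C * \<sigma>^4)"
      if "a > 4"
      by (rule order_trans[OF nn_integral_sq_mom_est_error_le[OF part sp s4 blocks(2)
          noise_class_fourth_moment[OF nc that assms(1), folded K_def]]])
        (auto simp: C_def intro!: ennreal_leI mult_right_mono)
    ultimately show "let M = PiM {0..<d} (\<lambda>_. P); est = (\<lambda>\<xi>. mom_est B m (\<lambda>j. \<theta> j + \<sigma> * \<xi> j)) in
        measure M {\<xi> \<in> space M. 1/2 \<le> est \<xi> / \<sigma>\<^sup>2 \<and> est \<xi> / \<sigma>\<^sup>2 \<le> 3/2} \<ge> 1 - exp (- (1 / (64 * real N)) * real d) \<and>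
        (\<integral>\<^sup>+ \<xi>. ennreal \<bar>est \<xi> - \<sigma>\<^sup>2\<bar> \<partial>M) \<le> ennreal (C * \<sigma>\<^sup>2) \<and>
        (a > 4 \<longrightarrow> (\<integral>\<^sup>+ \<xi>. ennreal ((est \<xi> - \<sigma>\<^sup>2)\<^sup>2) \<partial>M) \<le> ennreal (C * \<sigma>^4))"
      unfolding Let_def by blast
  qed (use N in \<open>auto simp: C_def\<close>)
qed

end
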